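(* Let $0<\beta<\frac13$ and let $S\subset\mathbb{R}$ be a Bernstein set. Then McMullen's absolute winning game with parameter $\beta$ and target set $S$ is not determined, i.e., neither Alice nor Bob has a winning strategy.
   Context: A Bernstein set is a set $S\subset\mathbb{R}$ that has nonempty intersection with every closed uncountable subset of $\mathbb{R}$ but contains no closed uncountable subset of $\mathbb{R}$. McMullen's absolute winning game with parameter $0<\beta<\frac13$ and target set $S$: Bob first chooses a compact interval $B_0$ of positive length. Alice then chooses an interval $A_0\subset B_0$ with $|A_0|=\beta|B_0|$. Bob then chooses a compact interval $B_1\subset B_0\setminus A_0$ with $|B_1|=\beta|B_0|$, and so on: for every $n\ge0$, $A_n\subset B_n$ with $|A_n|=\beta|B_n|$, and $B_{n+1}\subset B_n\setminus A_n$ with $|B_{n+1}|=\beta|B_n|$. Alice wins if $\bigcap_{n\ge0}B_n$ has nonempty intersection with $S$; otherwise Bob wins. Here $|I|$ denotes the length of an interval $I$. A strategy for a player is a rule specifying a legal move in every possible situation as a function of all previously chosen intervals; it is winning if it guarantees that player wins regardless of the opponent's moves. The game is determined on $S$ if one of the players has a winning strategy, and not determined otherwise. *)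

theory Defs
  imports "HOL-Analysis.Analysis"
begin

definition bernstein_set :: "real set \<Rightarrow> bool" where
  "bernstein_set S \<longleftrightarrow>
     (\<forall>C. closed C \<and> uncountable C \<longrightarrow> S \<inter> C \<noteq> {}) \<and>
     (\<forall>C. closed C \<and> uncountable C \<longrightarrow> \<not> C \<subseteq> S)"

definition ilen :: "real set \<Rightarrow> real" where
  "ilen I = Sup I - Inf I"

definition cpt_interval :: "real set \<Rightarrow> bool" where
  "cpt_interval I \<longleftrightarrow> (\<exists>a b. a < b \<and> I = {a..b})"

definition alice_move :: "real \<Rightarrow> real set \<Rightarrow> real set \<Rightarrow> bool" where
  "alice_move \<beta> B A \<longleftrightarrow> A \<noteq> {} \<and> is_interval A \<and> A \<subseteq> B \<and> ilen A = \<beta> * ilen B"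

definition bob_move :: "real \<Rightarrow> real set \<Rightarrow> real set \<Rightarrow> real set \<Rightarrow> bool" where
  "bob_move \<beta> B A B' \<longleftrightarrow> cpt_interval B' \<and> B' \<subseteq> B - A \<and> ilen B' = \<beta> * ilen B"

text \<open>The first n rounds (B_0, A_0, ..., A_{n-1}, B_n) are legal.\<close>
definition legal_upto :: "real \<Rightarrow> (nat \<Rightarrow> real set) \<Rightarrow> (nat \<Rightarrow> real set) \<Rightarrow> nat \<Rightarrow> bool" where
  "legal_upto \<beta> B A n \<longleftrightarrow> cpt_interval (B 0) \<and>
     (\<forall>i<n. alice_move \<beta> (B i) (A i) \<and> bob_move \<beta> (B i) (A i) (B (Suc i)))"

definition legal_play :: "real \<Rightarrow> (nat \<Rightarrow> real set) \<Rightarrow> (nat \<Rightarrow> real set) \<Rightarrow> bool" where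
  "legal_play \<beta> B A \<longleftrightarrow> (\<forall>n. legal_upto \<beta> B A n)"

definition hist :: "(nat \<Rightarrow> real set) \<Rightarrow> (nat \<Rightarrow> real set) \<Rightarrow> nat \<Rightarrow> real set list" where
  "hist B A n = concat (map (\<lambda>i. [B i, A i]) [0..<n])"

text \<open>Alice's strategies: from the history [B_0, A_0, ..., B_n] produce A_n;
  it must be legal in every legal position.\<close>
definition alice_strategy :: "real \<Rightarrow> (real set list \<Rightarrow> real set) \<Rightarrow> bool" where
  "alice_strategy \<beta> \<sigma> \<longleftrightarrow>
     (\<forall>B A n. legal_upto \<beta> B A n \<longrightarrow> alice_move \<beta> (B n) (\<sigma> (hist B A n @ [B n])))"

text \<open>Bob's strategies: from the history [] produce B_0, from [B_0, A_0, ..., B_n, A_n]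
  produce B_{n+1}; it must be legal in every legal position.\<close>
definition bob_strategy :: "real \<Rightarrow> (real set list \<Rightarrow> real set) \<Rightarrow> bool" where
  "bob_strategy \<beta> \<tau> \<longleftrightarrow> cpt_interval (\<tau> []) \<and>
     (\<forall>B A n. legal_upto \<beta> B A n \<and> alice_move \<beta> (B n) (A n) \<longrightarrow>
         bob_move \<beta> (B n) (A n) (\<tau> (hist B A (Suc n))))"

definition alice_winning :: "real \<Rightarrow> real set \<Rightarrow> (real set list \<Rightarrow> real set) \<Rightarrow> bool" where
  "alice_winning \<beta> S \<sigma> \<longleftrightarrow> alice_strategy \<beta> \<sigma> \<and>
     (\<forall>B A. legal_play \<beta> B A \<and> (\<forall>n. A n = \<sigma> (hist B A n @ [B n]))
        \<longrightarrow> (\<Inter>n. B n) \<inter> S \<noteq> {})"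

definition bob_winning :: "real \<Rightarrow> real set \<Rightarrow> (real set list \<Rightarrow> real set) \<Rightarrow> bool" where
  "bob_winning \<beta> S \<tau> \<longleftrightarrow> bob_strategy \<beta> \<tau> \<and>
     (\<forall>B A. legal_play \<beta> B A \<and> B 0 = \<tau> [] \<and> (\<forall>n. B (Suc n) = \<tau> (hist B A (Suc n)))
        \<longrightarrow> (\<Inter>n. B n) \<inter> S = {})"

definition abs_game_determined :: "real \<Rightarrow> real set \<Rightarrow> bool" where
  "abs_game_determined \<beta> S \<longleftrightarrow> (\<exists>\<sigma>. alice_winning \<beta> S \<sigma>) \<or> (\<exists>\<tau>. bob_winning \<beta> S \<tau>)"

end

theory Submission
  imports Defs
begin

text \<open>
  Against a fixed strategy of either player, the opponent builds a Cantor scheme of positions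
  following that strategy: a binary tree of finite plays whose current intervals are nested, with
  disjoint intervals at sibling nodes. The points lying on a branch form a closed uncountable set C,
  and each of them lies in the intersection of a complete play following the strategy.

  Against Bob, Alice splits a position by blocking either the left end of Bob's interval or exactly
  the interval X that Bob answers to that; in the second case Bob must answer outside X. As C meets
  the Bernstein set S, some play following Bob's strategy ends in S.

  Against Alice, with beta < 1/3, Bob can push any given point p out of his interval. If he cannot
  avoid p at once, then p is cornered near an end of his interval while a whole window of answers is
  open to him. Consequently, if the relative positions of p that keep Bob pinned for k + 1 more
  rounds contain an interval of length d, those keeping him pinned for k more rounds contain an
  interval of length d + (1 - 3 beta)/2; as relative positions lie in [0, 1], Bob cannot stay pinned
  for 2/(1 - 3 beta) rounds. Hence every position has two extensions with disjoint intervals: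
  otherwise the supremum of the left endpoints of all reachable intervals would be a point Bob
  cannot escape. Now C is not contained in S, and the play through a point of C outside S follows
  Alice's strategy and shrinks to that point.
\<close>

section \<open>Cantor schemes\<close>

lemma uncountable_UNIV_nat_bool_fun: "uncountable (UNIV :: (nat \<Rightarrow> bool) set)"
proof
  assume "countable (UNIV :: (nat \<Rightarrow> bool) set)"
  then have "range (from_nat_into (UNIV :: (nat \<Rightarrow> bool) set)) = UNIV"
    by simp
  then have "(\<lambda>n. Collect (from_nat_into UNIV n)) ` UNIV = (Pow UNIV :: nat set set)"
    by (metis Collect_mem_eq Pow_UNIV UNIV_I image_image rangeI surj_def)
  then show False
    using Cantors_theorem by blast
qed

definition branch :: "(nat \<Rightarrow> bool) \<Rightarrow> nat \<Rightarrow> bool list" where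
  "branch f k = map f (rev [0..<k])"

lemma branch_0 [simp]: "branch f 0 = []"
  and branch_Suc [simp]: "branch f (Suc k) = f k # branch f k"
  and length_branch [simp]: "length (branch f k) = k"
  by (simp_all add: branch_def)

lemma branch_suffix: "m \<le> n \<Longrightarrow> \<exists>u. branch f n = u @ branch f m"
proof (induction n rule: dec_induct)
  case (step n)
  then show ?case by (metis Cons_eq_appendI branch_Suc)
qed simp

locale cantor_scheme =
  fixes K :: "bool list \<Rightarrow> 'a::heine_borel set"
  assumes compact: "compact (K s)"
    and nonempty: "K s \<noteq> {}"
    and nested: "K (b # s) \<subseteq> K s"
    and disjoint: "K (True # s) \<inter> K (False # s) = {}"
begin

definition cantor_set :: "'a set" where
  "cantor_set = (\<Inter>k. \<Union>s\<in>{s. length s = k}. K s)"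

lemma append_subset: "K (u @ s) \<subseteq> K s"
  by (induction u) (use nested in auto)

lemma disjoint_same_length: "length s = length s' \<Longrightarrow> s \<noteq> s' \<Longrightarrow> K s \<inter> K s' = {}"
proof (induction s arbitrary: s')
  case (Cons b s)
  then obtain b' s'' where s': "s' = b' # s''" and "length s = length s''"
    by (cases s') auto
  show ?case
  proof (cases "s = s''")
    case True
    then show ?thesis
      using Cons.prems disjoint[of s] s' by (cases b) (auto simp: Int_commute)
  next
    case False
    then have "K s \<inter> K s'' = {}"
      using Cons.IH \<open>length s = length s''\<close> by blast
    then show ?thesis
      using nested[of b s] nested[of b' s''] s' by blast
  qed
qed simp

lemma closed_cantor_set: "closed cantor_set"
  unfolding cantor_set_def
  using finite_lists_length_eq[of "UNIV :: bool set"]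
  by (intro closed_INT ballI closed_UN compact_imp_closed compact) auto

lemma Inter_branch_nonempty: "(\<Inter>k. K (branch f k)) \<noteq> {}"
proof -
  have "m \<le> n \<Longrightarrow> K (branch f n) \<subseteq> K (branch f m)" for m n
    using branch_suffix append_subset by metis
  then show ?thesis
    using compact_nest[of "\<lambda>k. K (branch f k)"] compact nonempty by blast
qed

lemma uncountable_cantor_set: "uncountable cantor_set"
proof
  assume countable: "countable cantor_set"
  have "\<forall>f. \<exists>x. \<forall>k. x \<in> K (branch f k)"
    using Inter_branch_nonempty by blast
  then obtain g where g: "\<And>f k. g f \<in> K (branch f k)"
    by metis
  have "g f \<in> cantor_set" for f
    unfolding cantor_set_def using g length_branch by blast
  moreover have "inj g"
  proof
    fix f f' assume "g f = g f'"
    then have "K (branch f (Suc k)) \<inter> K (branch f' (Suc k)) \<noteq> {}" for k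
      using g by (metis disjoint_iff)
    then have "branch f (Suc k) = branch f' (Suc k)" for k
      using disjoint_same_length by (metis length_branch)
    then show "f = f'"
      by fastforce
  qed
  ultimately have "countable (UNIV :: (nat \<Rightarrow> bool) set)"
    using countable countable_image_inj_on countable_subset by (metis image_subsetI)
  then show False
    using uncountable_UNIV_nat_bool_fun by blast
qed

lemma cantor_set_branch:
  assumes x: "x \<in> cantor_set"
  obtains f where "\<And>k. x \<in> K (branch f k)"
proof -
  have "\<forall>k. \<exists>s. length s = k \<and> x \<in> K s"
    using x unfolding cantor_set_def by blast
  then obtain s where s: "\<And>k. length (s k) = k" "\<And>k. x \<in> K (s k)"
    by metis
  have unique: "t = s k" if "length t = k" "x \<in> K t" for t k
    using disjoint_same_length[of t "s k"] that s[of k] by auto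
  have s_Suc: "s (Suc k) = hd (s (Suc k)) # s k" for k
  proof -
    obtain b t where bt: "s (Suc k) = b # t"
      using s(1)[of "Suc k"] by (cases "s (Suc k)") auto
    then have "t = s k"
      using unique[of t k] s[of "Suc k"] nested[of b t] by auto
    then show ?thesis
      using bt by simp
  qed
  have "branch (\<lambda>k. hd (s (Suc k))) k = s k" for k
  proof (induction k)
    case (Suc k)
    then show ?case
      using s_Suc[of k] by simp
  qed (use s(1)[of 0] in simp)
  then show ?thesis
    using that s(2) by metis
qed

end

section \<open>Positions and strategies\<close>

lemma hist_Suc [simp]: "hist B A (Suc n) = hist B A n @ [B n, A n]"
  by (simp add: hist_def)

lemma hist_cong:
  "(\<And>i. i < n \<Longrightarrow> B i = B' i) \<Longrightarrow> (\<And>i. i < n \<Longrightarrow> A i = A' i) \<Longrightarrow> hist B A n = hist B' A' n"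
  unfolding hist_def by (intro arg_cong[where f = concat] map_cong) auto

lemma legal_upto_Suc:
  "legal_upto \<beta> B A (Suc n) \<longleftrightarrow>
     legal_upto \<beta> B A n \<and> alice_move \<beta> (B n) (A n) \<and> bob_move \<beta> (B n) (A n) (B (Suc n))"
  unfolding legal_upto_def by (auto simp: less_Suc_eq)

lemma legal_upto_cong:
  "legal_upto \<beta> B' A' n \<Longrightarrow> m \<le> n \<Longrightarrow> (\<And>i. i \<le> m \<Longrightarrow> B i = B' i) \<Longrightarrow>
     (\<And>i. i < m \<Longrightarrow> A i = A' i) \<Longrightarrow> legal_upto \<beta> B A m"
  unfolding legal_upto_def by auto

lemma legal_upto_cpt_interval: "legal_upto \<beta> B A n \<Longrightarrow> cpt_interval (B n)"
  unfolding legal_upto_def bob_move_def by (cases n) auto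

lemma legal_upto_nested:
  assumes "legal_upto \<beta> B A n" "i \<le> j" "j \<le> n"
  shows "B j \<subseteq> B i"
  using assms(2,3)
proof (induction j rule: dec_induct)
  case (step m)
  then have "B (Suc m) \<subseteq> B m"
    using assms(1) unfolding legal_upto_def bob_move_def by (metis Diff_subset Suc_le_lessD subset_trans)
  with step show ?case
    by simp
qed simp

lemma cpt_interval_compact: "cpt_interval I \<Longrightarrow> compact I \<and> I \<noteq> {}"
  unfolding cpt_interval_def by auto

lemma cpt_interval_Inf_Sup: "cpt_interval I \<Longrightarrow> I = {Inf I..Sup I}"
  unfolding cpt_interval_def by auto

text \<open>\<^term>\<open>Pos B A n\<close> is the position after n rounds: only \<^term>\<open>B i\<close> for \<^term>\<open>i \<le> n\<close> and
  \<^term>\<open>A i\<close> for \<^term>\<open>i < n\<close> have been played; the other values are irrelevant.\<close>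

datatype position = Pos (pos_B: "nat \<Rightarrow> real set") (pos_A: "nat \<Rightarrow> real set") (pos_round: nat)

definition pos_box :: "position \<Rightarrow> real set" where
  "pos_box P = pos_B P (pos_round P)"

definition history :: "position \<Rightarrow> real set list" where
  "history P = hist (pos_B P) (pos_A P) (pos_round P)"

definition legal_pos :: "real \<Rightarrow> position \<Rightarrow> bool" where
  "legal_pos \<beta> P \<longleftrightarrow> legal_upto \<beta> (pos_B P) (pos_A P) (pos_round P)"

definition extends :: "position \<Rightarrow> position \<Rightarrow> bool" where
  "extends P Q \<longleftrightarrow> pos_round P < pos_round Q \<and>
     (\<forall>i \<le> pos_round P. pos_B Q i = pos_B P i) \<and> (\<forall>i < pos_round P. pos_A Q i = pos_A P i)"

primrec advance :: "position \<Rightarrow> real set \<Rightarrow> real set \<Rightarrow> position" where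
  "advance (Pos B A n) A' X = Pos (B(Suc n := X)) (A(n := A')) (Suc n)"

lemma legal_pos_cpt_interval: "legal_pos \<beta> P \<Longrightarrow> cpt_interval (pos_box P)"
  unfolding legal_pos_def pos_box_def by (rule legal_upto_cpt_interval)

lemma pos_box_advance [simp]: "pos_box (advance P A' X) = X"
  by (cases P) (simp add: pos_box_def)

lemma extends_advance: "extends P (advance P A' X)"
  by (cases P) (simp add: extends_def)

lemma legal_pos_advance:
  assumes "legal_pos \<beta> P" "alice_move \<beta> (pos_box P) A'" "bob_move \<beta> (pos_box P) A' X"
  shows "legal_pos \<beta> (advance P A' X)"
proof (cases P)
  case (Pos B A n)
  have "legal_upto \<beta> B A n"
    using assms(1) Pos by (simp add: legal_pos_def)
  then have "legal_upto \<beta> (B(Suc n := X)) (A(n := A')) n"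
    by (rule legal_upto_cong) auto
  then show ?thesis
    using assms Pos by (simp add: legal_pos_def pos_box_def legal_upto_Suc)
qed

lemma extends_trans: "extends P Q \<Longrightarrow> extends Q R \<Longrightarrow> extends P R"
  unfolding extends_def by auto

lemma extends_box_subset: "legal_pos \<beta> Q \<Longrightarrow> extends P Q \<Longrightarrow> pos_box Q \<subseteq> pos_box P"
  unfolding extends_def legal_pos_def pos_box_def
  by (metis legal_upto_nested order.refl less_imp_le)

definition alice_reply :: "(real set list \<Rightarrow> real set) \<Rightarrow> position \<Rightarrow> real set" where
  "alice_reply \<sigma> P = \<sigma> (history P @ [pos_box P])"

definition bob_reply :: "(real set list \<Rightarrow> real set) \<Rightarrow> position \<Rightarrow> real set \<Rightarrow> real set" where
  "bob_reply \<tau> P A' = \<tau> (history P @ [pos_box P, A'])"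

lemma alice_reply_legal:
  "alice_strategy \<beta> \<sigma> \<Longrightarrow> legal_pos \<beta> P \<Longrightarrow> alice_move \<beta> (pos_box P) (alice_reply \<sigma> P)"
  unfolding alice_strategy_def alice_reply_def legal_pos_def history_def pos_box_def by blast

lemma bob_reply_legal:
  assumes \<tau>: "bob_strategy \<beta> \<tau>" and P: "legal_pos \<beta> P" and A': "alice_move \<beta> (pos_box P) A'"
  shows "bob_move \<beta> (pos_box P) A' (bob_reply \<tau> P A')"
proof (cases P)
  case (Pos B A n)
  have "legal_upto \<beta> B A n"
    using P Pos by (simp add: legal_pos_def)
  then have "legal_upto \<beta> B (A(n := A')) n"
    by (rule legal_upto_cong) auto
  moreover have "hist B (A(n := A')) n = hist B A n"
    by (rule hist_cong) auto
  ultimately show ?thesis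
    using \<tau> A' Pos unfolding bob_strategy_def
    by (force simp: bob_reply_def history_def pos_box_def)
qed

primrec alice_follows :: "real \<Rightarrow> (real set list \<Rightarrow> real set) \<Rightarrow> position \<Rightarrow> bool" where
  "alice_follows \<beta> \<sigma> (Pos B A n) \<longleftrightarrow> legal_upto \<beta> B A n \<and> (\<forall>i<n. A i = \<sigma> (hist B A i @ [B i]))"

primrec bob_follows :: "real \<Rightarrow> (real set list \<Rightarrow> real set) \<Rightarrow> position \<Rightarrow> bool" where
  "bob_follows \<beta> \<tau> (Pos B A n) \<longleftrightarrow>
     legal_upto \<beta> B A n \<and> B 0 = \<tau> [] \<and> (\<forall>i<n. B (Suc i) = \<tau> (hist B A (Suc i)))"

lemma alice_follows_legal: "alice_follows \<beta> \<sigma> P \<Longrightarrow> legal_pos \<beta> P"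
  by (cases P) (simp add: legal_pos_def)

lemma bob_follows_legal: "bob_follows \<beta> \<tau> P \<Longrightarrow> legal_pos \<beta> P"
  by (cases P) (simp add: legal_pos_def)

lemma alice_follows_advance:
  assumes \<sigma>: "alice_strategy \<beta> \<sigma>" and P: "alice_follows \<beta> \<sigma> P"
    and X: "bob_move \<beta> (pos_box P) (alice_reply \<sigma> P) X"
  shows "alice_follows \<beta> \<sigma> (advance P (alice_reply \<sigma> P) X)"
proof (cases P)
  case (Pos B A n)
  have "legal_pos \<beta> (advance P (alice_reply \<sigma> P) X)"
    using P X alice_follows_legal alice_reply_legal[OF \<sigma>] legal_pos_advance by blast
  moreover have "hist (B(Suc n := X)) (A(n := alice_reply \<sigma> P)) i = hist B A i" if "i \<le> n" for i
    using that by (intro hist_cong) auto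
  ultimately show ?thesis
    using P Pos by (auto simp: legal_pos_def alice_reply_def history_def pos_box_def less_Suc_eq)
qed

lemma bob_follows_advance:
  assumes \<tau>: "bob_strategy \<beta> \<tau>" and P: "bob_follows \<beta> \<tau> P" and A': "alice_move \<beta> (pos_box P) A'"
  shows "bob_follows \<beta> \<tau> (advance P A' (bob_reply \<tau> P A'))"
proof (cases P)
  case (Pos B A n)
  have "legal_pos \<beta> (advance P A' (bob_reply \<tau> P A'))"
    using P A' bob_follows_legal bob_reply_legal[OF \<tau>] legal_pos_advance by blast
  moreover have "hist (B(Suc n := bob_reply \<tau> P A')) (A(n := A')) i = hist B A i" if "i \<le> n" for i
    using that by (intro hist_cong) auto
  ultimately show ?thesis
    using P Pos by (auto simp: legal_pos_def bob_reply_def history_def pos_box_def less_Suc_eq)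
qed

section \<open>Chains of positions and their limit plays\<close>

locale position_chain =
  fixes Q :: "nat \<Rightarrow> position"
  assumes extends_Suc: "extends (Q k) (Q (Suc k))"
begin

lemma extends_less: "i < j \<Longrightarrow> extends (Q i) (Q j)"
proof (induction j)
  case (Suc j)
  then show ?case
    using extends_Suc extends_trans by (metis less_Suc_eq)
qed simp

lemma round_ge: "k \<le> pos_round (Q k)"
proof (induction k)
  case (Suc k)
  then show ?case
    using extends_Suc[of k] by (simp add: extends_def)
qed simp

definition limit_B :: "nat \<Rightarrow> real set" where
  "limit_B i = pos_B (Q i) i"

text \<open>Alice's \<open>i\<close>-th move may still be missing in \<^term>\<open>Q i\<close>, so it is read off \<^term>\<open>Q (Suc i)\<close>.\<close>

definition limit_A :: "nat \<Rightarrow> real set" where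
  "limit_A i = pos_A (Q (Suc i)) i"

lemma limit_B_eq: "i \<le> m \<Longrightarrow> limit_B i = pos_B (Q m) i"
  using extends_less[of i m] round_ge[of i]
  by (cases "i = m") (auto simp: limit_B_def extends_def)

lemma limit_A_eq: "i < m \<Longrightarrow> limit_A i = pos_A (Q m) i"
  using extends_less[of "Suc i" m] round_ge[of "Suc i"]
  by (cases "Suc i = m") (auto simp: limit_A_def extends_def)

lemma hist_limit: "hist limit_B limit_A m = hist (pos_B (Q m)) (pos_A (Q m)) m"
  by (rule hist_cong) (simp_all add: limit_B_eq limit_A_eq)

lemma legal_play_limit:
  assumes "\<And>k. legal_pos \<beta> (Q k)"
  shows "legal_play \<beta> limit_B limit_A"
  unfolding legal_play_def
proof
  fix m
  have "legal_upto \<beta> (pos_B (Q m)) (pos_A (Q m)) (pos_round (Q m))"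
    using assms legal_pos_def by blast
  then show "legal_upto \<beta> limit_B limit_A m"
    by (rule legal_upto_cong) (simp_all add: round_ge limit_B_eq limit_A_eq)
qed

lemma pos_box_subset_limit_B: "legal_pos \<beta> (Q k) \<Longrightarrow> pos_box (Q k) \<subseteq> limit_B k"
  unfolding legal_pos_def pos_box_def limit_B_def
  using legal_upto_nested round_ge by blast

lemma alice_follows_limit:
  assumes "\<And>k. alice_follows \<beta> \<sigma> (Q k)"
  shows "limit_A n = \<sigma> (hist limit_B limit_A n @ [limit_B n])"
proof (cases "Q (Suc n)")
  case (Pos B A m)
  have "n < m"
    using round_ge[of "Suc n"] Pos by simp
  then have "A n = \<sigma> (hist B A n @ [B n])"
    using assms[of "Suc n"] Pos by simp
  moreover have "hist limit_B limit_A n = hist B A n"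
    using hist_limit[of "Suc n"] Pos by (simp add: limit_B_def limit_A_def)
  ultimately show ?thesis
    using limit_B_eq[of n "Suc n"] limit_A_eq[of n "Suc n"] Pos by simp
qed

lemma bob_follows_limit:
  assumes "\<And>k. bob_follows \<beta> \<tau> (Q k)"
  shows "limit_B 0 = \<tau> []" and "limit_B (Suc n) = \<tau> (hist limit_B limit_A (Suc n))"
proof -
  show "limit_B 0 = \<tau> []"
    using assms[of 0] by (cases "Q 0") (simp add: limit_B_def)
  show "limit_B (Suc n) = \<tau> (hist limit_B limit_A (Suc n))"
  proof (cases "Q (Suc n)")
    case (Pos B A m)
    have "n < m"
      using round_ge[of "Suc n"] Pos by simp
    then show ?thesis
      using assms[of "Suc n"] hist_limit[of "Suc n"] Pos by (simp add: limit_B_def)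
  qed
qed

end

lemma splitting_positions_chain:
  assumes V0: "V P0"
    and legal: "\<And>P. V P \<Longrightarrow> legal_pos \<beta> P"
    and split: "\<And>P. V P \<Longrightarrow> \<exists>Q1 Q2. V Q1 \<and> V Q2 \<and> extends P Q1 \<and> extends P Q2 \<and>
                                   pos_box Q1 \<inter> pos_box Q2 = {}"
  shows "\<exists>C. closed C \<and> uncountable C \<and>
           (\<forall>x \<in> C. \<exists>Q. position_chain Q \<and> (\<forall>k. V (Q k) \<and> x \<in> pos_box (Q k)))"
proof -
  obtain c1 c2 where c: "\<And>P. V P \<Longrightarrow> V (c1 P) \<and> V (c2 P) \<and> extends P (c1 P) \<and> extends P (c2 P) \<and>
                                   pos_box (c1 P) \<inter> pos_box (c2 P) = {}"
    using split by metis
  define child where "child b P = (if b then c1 P else c2 P)" for b P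
  define node where "node s = foldr child s P0" for s
  have V_node: "V (node s)" for s
    by (induction s) (simp_all add: node_def V0 child_def c)
  have node_Cons: "node (b # s) = child b (node s)" for b s
    by (simp add: node_def)
  interpret cantor_scheme "\<lambda>s. pos_box (node s)"
  proof
    fix s b
    show "compact (pos_box (node s))" "pos_box (node s) \<noteq> {}"
      using cpt_interval_compact legal_pos_cpt_interval legal V_node by blast+
    show "pos_box (node (b # s)) \<subseteq> pos_box (node s)"
      using extends_box_subset legal V_node c unfolding node_Cons child_def by (metis (full_types))
    show "pos_box (node (True # s)) \<inter> pos_box (node (False # s)) = {}"
      using c V_node by (simp add: node_Cons child_def)
  qed
  have "\<exists>Q. position_chain Q \<and> (\<forall>k. V (Q k) \<and> x \<in> pos_box (Q k))" if x: "x \<in> cantor_set" for x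
  proof -
    obtain f where f: "\<And>k. x \<in> pos_box (node (branch f k))"
      using x by (metis cantor_set_branch)
    have "position_chain (\<lambda>k. node (branch f k))"
      by unfold_locales (simp add: node_Cons child_def c V_node)
    then show ?thesis
      using f V_node by blast
  qed
  then show ?thesis
    using closed_cantor_set uncountable_cantor_set by blast
qed

section \<open>Bob has no winning strategy\<close>

definition left_block :: "real \<Rightarrow> real set \<Rightarrow> real set" where
  "left_block \<beta> I = {Inf I .. Inf I + \<beta> * ilen I}"

lemma alice_move_left_block:
  assumes "0 < \<beta>" "\<beta> < 1" "cpt_interval I"
  shows "alice_move \<beta> I (left_block \<beta> I)"
proof -
  obtain a b where ab: "a < b" "I = {a..b}"
    using assms(3) unfolding cpt_interval_def by blast
  have "\<beta> * (b - a) < b - a"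
    using assms(2) ab(1) by simp
  then have "a + \<beta> * (b - a) \<le> b"
    by linarith
  then show ?thesis
    using assms(1) ab by (auto simp: alice_move_def left_block_def ilen_def is_interval_cc)
qed

lemma bob_move_imp_alice_move: "bob_move \<beta> I A X \<Longrightarrow> alice_move \<beta> I X"
  unfolding alice_move_def bob_move_def cpt_interval_def by (auto simp: is_interval_cc)

text \<open>Alice blocks either the left end of Bob's interval or exactly Bob's answer \<open>X0\<close> to that;
  the second choice forces an answer disjoint from \<open>X0\<close>.\<close>

lemma bob_follows_split:
  assumes \<tau>: "bob_strategy \<beta> \<tau>" and \<beta>: "0 < \<beta>" "\<beta> < 1" and P: "bob_follows \<beta> \<tau> P"
  shows "\<exists>Q1 Q2. bob_follows \<beta> \<tau> Q1 \<and> bob_follows \<beta> \<tau> Q2 \<and> extends P Q1 \<and> extends P Q2 \<and>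
                 pos_box Q1 \<inter> pos_box Q2 = {}"
proof -
  define A0 where "A0 = left_block \<beta> (pos_box P)"
  define X0 where "X0 = bob_reply \<tau> P A0"
  define X1 where "X1 = bob_reply \<tau> P X0"
  have legal: "legal_pos \<beta> P"
    using P by (rule bob_follows_legal)
  have A0: "alice_move \<beta> (pos_box P) A0"
    unfolding A0_def using \<beta> legal legal_pos_cpt_interval by (blast intro: alice_move_left_block)
  then have X0: "bob_move \<beta> (pos_box P) A0 X0"
    unfolding X0_def using \<tau> legal by (rule bob_reply_legal[rotated 2])
  then have alice_X0: "alice_move \<beta> (pos_box P) X0"
    by (rule bob_move_imp_alice_move)
  then have "bob_move \<beta> (pos_box P) X0 X1"
    unfolding X1_def using \<tau> legal by (rule bob_reply_legal[rotated 2])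
  then have "X0 \<inter> X1 = {}"
    unfolding bob_move_def by blast
  then show ?thesis
    using bob_follows_advance[OF \<tau> P A0] bob_follows_advance[OF \<tau> P alice_X0] extends_advance
    unfolding X0_def X1_def by (metis pos_box_advance)
qed

theorem bob_not_winning:
  assumes \<beta>: "0 < \<beta>" "\<beta> < 1" and S: "bernstein_set S"
  shows "\<not> bob_winning \<beta> S \<tau>"
proof
  assume win: "bob_winning \<beta> S \<tau>"
  then have \<tau>: "bob_strategy \<beta> \<tau>"
    by (simp add: bob_winning_def)
  have "bob_follows \<beta> \<tau> (Pos (\<lambda>_. \<tau> []) (\<lambda>_. {}) 0)"
    using \<tau> by (simp add: bob_strategy_def legal_upto_def)
  then have "\<exists>C. closed C \<and> uncountable C \<and>
               (\<forall>x \<in> C. \<exists>Q. position_chain Q \<and> (\<forall>k. bob_follows \<beta> \<tau> (Q k) \<and> x \<in> pos_box (Q k)))"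
    using bob_follows_legal bob_follows_split[OF \<tau> \<beta>]
    by (rule splitting_positions_chain[of "bob_follows \<beta> \<tau>"])
  then obtain C where C: "closed C" "uncountable C"
    and chain: "\<And>x. x \<in> C \<Longrightarrow> \<exists>Q. position_chain Q \<and> (\<forall>k. bob_follows \<beta> \<tau> (Q k) \<and> x \<in> pos_box (Q k))"
    by blast
  obtain x where x: "x \<in> S" "x \<in> C"
    using S C unfolding bernstein_set_def by blast
  obtain Q where Q: "position_chain Q" "\<And>k. bob_follows \<beta> \<tau> (Q k)" "\<And>k. x \<in> pos_box (Q k)"
    using chain[OF x(2)] by blast
  interpret position_chain Q
    by (fact Q(1))
  have "legal_play \<beta> limit_B limit_A"
    using Q(2) bob_follows_legal legal_play_limit by blast
  moreover have "x \<in> (\<Inter>n. limit_B n)"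
    using Q(2,3) bob_follows_legal pos_box_subset_limit_B by blast
  ultimately show False
    using win x(1) bob_follows_limit[OF Q(2)] unfolding bob_winning_def by blast
qed

section \<open>Alice has no winning strategy\<close>

lemma legal_play_ilen: "legal_play \<beta> B A \<Longrightarrow> ilen (B n) = \<beta> ^ n * ilen (B 0)"
proof (induction n)
  case (Suc n)
  then have "bob_move \<beta> (B n) (A n) (B (Suc n))"
    unfolding legal_play_def by (metis legal_upto_Suc)
  with Suc show ?case
    by (simp add: bob_move_def)
qed simp

lemma legal_play_Inter_subsingleton:
  assumes "0 \<le> \<beta>" "\<beta> < 1" and play: "legal_play \<beta> B A"
    and "x \<in> (\<Inter>n. B n)" "y \<in> (\<Inter>n. B n)"
  shows "x = y"
proof -
  have "\<bar>x - y\<bar> \<le> \<beta> ^ n * ilen (B 0)" for n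
  proof -
    obtain a b where "a < b" "B n = {a..b}"
      using play legal_upto_cpt_interval unfolding legal_play_def cpt_interval_def by metis
    moreover have "x \<in> B n" "y \<in> B n"
      using assms(4,5) by blast+
    ultimately have "\<bar>x - y\<bar> \<le> ilen (B n)"
      by (auto simp: ilen_def abs_le_iff)
    then show ?thesis
      using legal_play_ilen[OF play, of n] by linarith
  qed
  moreover have "(\<lambda>n. \<beta> ^ n) \<longlonglongrightarrow> 0"
    using assms(1,2) by (simp add: LIMSEQ_power_zero)
  then have "(\<lambda>n. \<beta> ^ n * ilen (B 0)) \<longlonglongrightarrow> 0"
    by (rule tendsto_mult_left_zero)
  ultimately have "\<bar>x - y\<bar> \<le> 0"
    using LIMSEQ_le_const by blast
  then show ?thesis
    by simp
qed

definition slack :: "real \<Rightarrow> real" where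
  "slack \<beta> = (1 - 3 * \<beta>) / 2"

lemma alice_move_bounds:
  assumes "alice_move \<beta> {a..b} A" "a < b"
  shows "a \<le> Inf A" "Sup A \<le> b" "Sup A - Inf A = \<beta> * (b - a)" "A \<subseteq> {Inf A..Sup A}"
proof -
  have A: "A \<noteq> {}" "A \<subseteq> {a..b}" "ilen A = \<beta> * ilen {a..b}"
    using assms(1) unfolding alice_move_def by auto
  have "bdd_below A" "bdd_above A"
    using A(2) by (meson bdd_below_Icc bdd_above_Icc bdd_below_mono bdd_above_mono)+
  then show "A \<subseteq> {Inf A..Sup A}"
    by (auto intro: cInf_lower cSup_upper)
  show "a \<le> Inf A" "Sup A \<le> b"
    using A(1,2) by (auto intro!: cInf_greatest cSup_least)
  show "Sup A - Inf A = \<beta> * (b - a)"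
    using A(3) assms(2) by (simp add: ilen_def)
qed

lemma bob_move_Icc:
  assumes A: "alice_move \<beta> {a..b} A" and "a < b" "0 < \<beta>"
    and c: "a \<le> c" "c + \<beta> * (b - a) \<le> b" "c + \<beta> * (b - a) < Inf A \<or> Sup A < c"
  shows "bob_move \<beta> {a..b} A {c..c + \<beta> * (b - a)}"
proof -
  have "0 < \<beta> * (b - a)"
    using assms by simp
  moreover have "{c..c + \<beta> * (b - a)} \<inter> A = {}"
    using alice_move_bounds(4)[OF A \<open>a < b\<close>] c(3) by fastforce
  ultimately show ?thesis
    using c(1,2) \<open>a < b\<close> by (auto simp: bob_move_def cpt_interval_def ilen_def)
qed

lemma window_avoids_or_cornered:
  fixes M :: "real set \<Rightarrow> bool"
  assumes window: "\<forall>c \<in> {c0..c0 + w}. M {c..c + l}" and "0 \<le> w"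
  shows "(\<exists>X. M X \<and> p \<notin> X) \<or> (w \<le> p - c0 \<and> p - c0 \<le> l \<and> (\<forall>c \<in> {c0..c0 + w}. M {c..c + l}))"
proof -
  have left: "M {c0..c0 + l}" and right: "M {c0 + w..c0 + w + l}"
    using bspec[OF window, of c0] bspec[OF window, of "c0 + w"] \<open>0 \<le> w\<close> by simp_all
  consider "p - c0 < w" | "l < p - c0" | "w \<le> p - c0 \<and> p - c0 \<le> l"
    by linarith
  then show ?thesis
  proof cases
    case 1
    then have "p \<notin> {c0 + w..c0 + w + l}"
      by simp
    then show ?thesis
      using right by blast
  next
    case 2
    then have "p \<notin> {c0..c0 + l}"
      by simp
    then show ?thesis
      using left by blast
  qed (use window in blast)
qed

lemma bob_avoids_or_cornered:
  assumes \<beta>: "0 < \<beta>" "\<beta> < 1/3" and "a < b" and A: "alice_move \<beta> {a..b} A" and p: "p \<in> {a..b}"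
  defines "L \<equiv> b - a" and "w \<equiv> slack \<beta>"
  shows "(\<exists>X. bob_move \<beta> {a..b} A X \<and> p \<notin> X) \<or>
         (\<exists>c0 \<in> {a, b - \<beta> * L - w * L}. w * L \<le> p - c0 \<and> p - c0 \<le> \<beta> * L \<and>
            (\<forall>c \<in> {c0..c0 + w * L}. bob_move \<beta> {a..b} A {c..c + \<beta> * L}))"
proof -
  have L: "0 < L" and w: "0 < w"
    using \<open>a < b\<close> \<beta> by (simp_all add: L_def w_def slack_def)
  have wL: "0 < w * L" and \<beta>L: "0 < \<beta> * L" and free: "L - \<beta> * L = 2 * (w * L) + 2 * (\<beta> * L)"
    using L w \<beta> by (simp_all add: w_def slack_def field_simps)
  have b: "b = a + L"
    by (simp add: L_def)
  note bounds = alice_move_bounds[OF A \<open>a < b\<close>, folded L_def]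
  have move: "bob_move \<beta> {a..b} A {c..c + \<beta> * L}"
    if "a \<le> c" "c + \<beta> * L \<le> b" "c + \<beta> * L < Inf A \<or> Sup A < c" for c
    using bob_move_Icc[OF A \<open>a < b\<close> \<beta>(1)] that unfolding L_def by blast
  consider (left) "Inf A - a \<ge> 2 * (w * L) + \<beta> * L" | (right) "b - Sup A \<ge> 2 * (w * L) + \<beta> * L"
    | (both) "Inf A - a > \<beta> * L" "b - Sup A > \<beta> * L"
    using bounds free b by linarith
  then show ?thesis
  proof cases
    case left
    have "\<forall>c \<in> {a..a + w * L}. bob_move \<beta> {a..b} A {c..c + \<beta> * L}"
      using left bounds wL \<beta>L by (intro ballI move) auto
    then show ?thesis
      using window_avoids_or_cornered[where p = p] wL by (metis insertI1 less_imp_le)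
  next
    case right
    have "\<forall>c \<in> {b - \<beta> * L - w * L..b - \<beta> * L - w * L + w * L}. bob_move \<beta> {a..b} A {c..c + \<beta> * L}"
      using right bounds wL \<beta>L free b by (intro ballI move) auto
    then show ?thesis
      using window_avoids_or_cornered[where p = p] wL by (metis insertI1 insertI2 less_imp_le)
  next
    case both
    have "bob_move \<beta> {a..b} A {a..a + \<beta> * L}" "bob_move \<beta> {a..b} A {b - \<beta> * L..b - \<beta> * L + \<beta> * L}"
      by (rule move; use both bounds \<beta>L b in linarith)+
    moreover have "a + \<beta> * L < b - \<beta> * L"
      using free wL \<beta>L b by linarith
    then have "p \<notin> {a..a + \<beta> * L} \<or> p \<notin> {b - \<beta> * L..b - \<beta> * L + \<beta> * L}"
      unfolding atLeastAtMost_iff by linarith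
    ultimately show ?thesis
      by blast
  qed
qed

primrec pinned :: "real \<Rightarrow> (real set list \<Rightarrow> real set) \<Rightarrow> real \<Rightarrow> nat \<Rightarrow> position \<Rightarrow> bool" where
  "pinned \<beta> \<sigma> p 0 P \<longleftrightarrow> p \<in> pos_box P"
| "pinned \<beta> \<sigma> p (Suc k) P \<longleftrightarrow> p \<in> pos_box P \<and>
     (\<forall>X. bob_move \<beta> (pos_box P) (alice_reply \<sigma> P) X \<longrightarrow> pinned \<beta> \<sigma> p k (advance P (alice_reply \<sigma> P) X))"

lemma pinned_in_box: "pinned \<beta> \<sigma> p k P \<Longrightarrow> p \<in> pos_box P"
  by (cases k) auto

definition rel_coord :: "real \<Rightarrow> real set \<Rightarrow> real" where
  "rel_coord p I = (p - Inf I) / ilen I"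

lemma rel_coord_Icc: "a < b \<Longrightarrow> rel_coord p {a..b} = (p - a) / (b - a)"
  by (simp add: rel_coord_def ilen_def)

lemma rel_coord_subinterval:
  assumes "0 < L" "0 < \<beta>"
  shows "rel_coord p {a + u * L..a + u * L + \<beta> * L} = (rel_coord p {a..a + L} - u) / \<beta>"
  using assms by (simp add: rel_coord_Icc field_simps)

locale fixed_alice_strategy =
  fixes \<beta> :: real and \<sigma> :: "real set list \<Rightarrow> real set"
  assumes \<beta>_pos: "0 < \<beta>" and \<beta>_small: "\<beta> < 1/3" and strategy: "alice_strategy \<beta> \<sigma>"
begin

lemma slack_pos: "0 < slack \<beta>"
  using \<beta>_small by (simp add: slack_def)

definition pinned_coords :: "real \<Rightarrow> nat \<Rightarrow> real set" where
  "pinned_coords p k = {rel_coord p (pos_box P) | P. legal_pos \<beta> P \<and> pinned \<beta> \<sigma> p k P}"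

lemma pinned_coords_unit_interval: "t \<in> pinned_coords p k \<Longrightarrow> t \<in> {0..1}"
proof -
  assume "t \<in> pinned_coords p k"
  then obtain P where P: "legal_pos \<beta> P" "pinned \<beta> \<sigma> p k P" "t = rel_coord p (pos_box P)"
    unfolding pinned_coords_def by blast
  obtain a b where ab: "a < b" "pos_box P = {a..b}"
    using legal_pos_cpt_interval[OF P(1)] unfolding cpt_interval_def by blast
  have "p \<in> {a..b}"
    using pinned_in_box[OF P(2)] ab(2) by simp
  then show ?thesis
    using P(3) ab by (simp add: rel_coord_Icc)
qed

lemma pinned_coords_advance:
  assumes "legal_pos \<beta> P" "pinned \<beta> \<sigma> p (Suc k) P" "bob_move \<beta> (pos_box P) (alice_reply \<sigma> P) X"
  shows "rel_coord p X \<in> pinned_coords p k"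
proof -
  have "legal_pos \<beta> (advance P (alice_reply \<sigma> P) X)" "pinned \<beta> \<sigma> p k (advance P (alice_reply \<sigma> P) X)"
    using assms legal_pos_advance alice_reply_legal[OF strategy] by auto
  then show ?thesis
    unfolding pinned_coords_def by (metis (mono_tags, lifting) mem_Collect_eq pos_box_advance)
qed

lemma pinned_coords_Suc:
  assumes "t \<in> pinned_coords p (Suc k)"
  shows "\<exists>u0 \<in> {0, 1 - \<beta> - slack \<beta>}. slack \<beta> \<le> t - u0 \<and> t - u0 \<le> \<beta> \<and>
           (\<forall>u \<in> {u0..u0 + slack \<beta>}. (t - u) / \<beta> \<in> pinned_coords p k)"
proof -
  define w where "w = slack \<beta>"
  obtain P where P: "legal_pos \<beta> P" "pinned \<beta> \<sigma> p (Suc k) P" "t = rel_coord p (pos_box P)"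
    using assms unfolding pinned_coords_def by blast
  obtain a b where ab: "a < b" "pos_box P = {a..b}"
    using legal_pos_cpt_interval[OF P(1)] unfolding cpt_interval_def by blast
  define L where "L = b - a"
  have aL: "0 < L" "pos_box P = {a..a + L}"
    using ab by (simp_all add: L_def)
  have t: "p - a = t * L"
    using P(3) aL by (simp add: rel_coord_Icc)
  have A: "alice_move \<beta> {a..a + L} (alice_reply \<sigma> P)" and p: "p \<in> {a..a + L}"
    using alice_reply_legal[OF strategy P(1)] pinned_in_box[OF P(2)] aL(2) by simp_all
  have no_escape: "\<not> (\<exists>X. bob_move \<beta> {a..a + L} (alice_reply \<sigma> P) X \<and> p \<notin> X)"
    using P(2) aL(2) pinned_in_box pos_box_advance by (metis pinned.simps(2))
  have "a < a + L"
    using aL(1) by simp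
  from bob_avoids_or_cornered[OF \<beta>_pos \<beta>_small this A p, unfolded add_diff_cancel_left', folded w_def]
  obtain c0 where c0: "c0 \<in> {a, a + L - \<beta> * L - w * L}" "w * L \<le> p - c0" "p - c0 \<le> \<beta> * L"
    and moves: "\<And>c. c \<in> {c0..c0 + w * L} \<Longrightarrow> bob_move \<beta> {a..a + L} (alice_reply \<sigma> P) {c..c + \<beta> * L}"
    using no_escape by blast
  define u0 where "u0 = (c0 - a) / L"
  have c0_eq: "c0 = a + u0 * L"
    using aL(1) by (simp add: u0_def)
  have "u0 \<in> {0, 1 - \<beta> - w}"
    using c0(1) aL(1) by (auto simp: u0_def field_simps)
  moreover have "p - c0 = (t - u0) * L"
    using t c0_eq by (simp add: left_diff_distrib)
  then have "w \<le> t - u0" "t - u0 \<le> \<beta>"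
    using c0(2,3) aL(1) by (simp_all add: mult_le_cancel_right_pos)
  moreover have "(t - u) / \<beta> \<in> pinned_coords p k" if u: "u \<in> {u0..u0 + w}" for u
  proof -
    have "u0 * L \<le> u * L" "u * L \<le> u0 * L + w * L"
      using u aL(1) by (simp_all add: distrib_right[symmetric])
    then have "bob_move \<beta> (pos_box P) (alice_reply \<sigma> P) {a + u * L..a + u * L + \<beta> * L}"
      using c0_eq aL(2) by (simp add: moves)
    then show ?thesis
      using pinned_coords_advance[OF P(1,2)] rel_coord_subinterval[OF aL(1) \<beta>_pos] P(3) aL(2) by metis
  qed
  ultimately show ?thesis
    unfolding w_def by blast
qed

text \<open>The corner \<open>0\<close> forces \<open>t \<le> \<beta>\<close> and the other corner \<open>1 - \<beta> \<le> t\<close>. As \<open>1/2\<close> is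
  never a pinned coordinate, an interval of pinned coordinates uses a single corner.\<close>

lemma pinned_coords_Suc_common_corner:
  assumes \<delta>: "0 \<le> \<delta>" and sub: "{x..x + \<delta>} \<subseteq> pinned_coords p (Suc k)"
  shows "\<exists>u0. \<forall>t \<in> {x..x + \<delta>}. \<forall>u \<in> {u0..u0 + slack \<beta>}. (t - u) / \<beta> \<in> pinned_coords p k"
proof -
  define w where "w = slack \<beta>"
  define cornered where "cornered t u0 \<longleftrightarrow> u0 \<in> {0, 1 - \<beta> - w} \<and> w \<le> t - u0 \<and> t - u0 \<le> \<beta> \<and>
      (\<forall>u \<in> {u0..u0 + w}. (t - u) / \<beta> \<in> pinned_coords p k)" for t u0
  have cornered: "\<exists>u0. cornered t u0" if "t \<in> {x..x + \<delta>}" for t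
    using pinned_coords_Suc sub that unfolding cornered_def w_def by blast
  have sides: "(u0 = 0 \<and> t \<le> \<beta>) \<or> (u0 = 1 - \<beta> - w \<and> 1 - \<beta> \<le> t)" if "cornered t u0" for t u0
    using that unfolding cornered_def by auto
  have half: "\<beta> < 1/2" "1/2 < 1 - \<beta>"
    using \<beta>_small by simp_all
  obtain u0 where u0: "cornered x u0"
    using cornered[of x] \<delta> by auto
  have "(t - u) / \<beta> \<in> pinned_coords p k" if t: "t \<in> {x..x + \<delta>}" and u: "u \<in> {u0..u0 + w}" for t u
  proof -
    obtain u1 where u1: "cornered t u1"
      using cornered t by blast
    have "u1 = u0"
    proof (rule ccontr)
      assume "u1 \<noteq> u0"
      then have "x \<le> \<beta> \<and> 1 - \<beta> \<le> t \<or> 1 - \<beta> \<le> x \<and> t \<le> \<beta>"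
        using sides[OF u0] sides[OF u1] by auto
      then have "1/2 \<in> {x..x + \<delta>}"
        using t half by auto
      then obtain u2 where "cornered (1/2) u2"
        using cornered by blast
      then show False
        using sides half by force
    qed
    then show ?thesis
      using u1 u unfolding cornered_def by blast
  qed
  then show ?thesis
    unfolding w_def by blast
qed

lemma pinned_coords_Suc_interval:
  assumes \<delta>: "0 \<le> \<delta>" and sub: "{x..x + \<delta>} \<subseteq> pinned_coords p (Suc k)"
  shows "\<exists>x'. {x'..x' + \<delta> + slack \<beta>} \<subseteq> pinned_coords p k"
proof -
  define w where "w = slack \<beta>"
  have w: "0 < w"
    using slack_pos by (simp add: w_def)
  obtain u0 where corner: "\<And>t u. t \<in> {x..x + \<delta>} \<Longrightarrow> u \<in> {u0..u0 + w} \<Longrightarrow> (t - u) / \<beta> \<in> pinned_coords p k"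
    using pinned_coords_Suc_common_corner[OF \<delta> sub] unfolding w_def by blast
  define x' where "x' = (x - u0 - w) / \<beta>"
  have "y \<in> pinned_coords p k" if y: "y \<in> {x'..x' + \<delta> + w}" for y
  proof -
    have "\<beta> * x' \<le> \<beta> * y" "\<beta> * y \<le> \<beta> * x' + \<beta> * (\<delta> + w)"
      using y \<beta>_pos by (simp_all add: distrib_left[symmetric] mult_left_mono)
    moreover have "\<beta> * x' = x - u0 - w"
      using \<beta>_pos by (simp add: x'_def)
    moreover have "\<beta> * (\<delta> + w) \<le> \<delta> + w"
      using \<beta>_small \<delta> w by (simp add: mult_left_le_one_le)
    ultimately have z: "x - u0 - w \<le> \<beta> * y" "\<beta> * y + u0 \<le> x + \<delta>"
      by linarith+
    define t where "t = max x (\<beta> * y + u0)"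
    have "t \<in> {x..x + \<delta>}" "t - \<beta> * y \<in> {u0..u0 + w}"
      using z \<delta> w by (auto simp: t_def)
    moreover have "y = (t - (t - \<beta> * y)) / \<beta>"
      using \<beta>_pos by simp
    ultimately show ?thesis
      using corner by metis
  qed
  then show ?thesis
    unfolding w_def by blast
qed

lemma pinned_coords_interval:
  "0 \<le> \<delta> \<Longrightarrow> {x..x + \<delta>} \<subseteq> pinned_coords p (k + j) \<Longrightarrow>
     \<exists>x'. {x'..x' + \<delta> + real j * slack \<beta>} \<subseteq> pinned_coords p k"
proof (induction j arbitrary: k)
  case (Suc j)
  then obtain x' where "{x'..x' + \<delta> + real j * slack \<beta>} \<subseteq> pinned_coords p (Suc k)"
    by (metis add_Suc_shift)
  moreover have "0 \<le> \<delta> + real j * slack \<beta>"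
    using Suc.prems(1) slack_pos by simp
  ultimately obtain x'' where "{x''..x'' + (\<delta> + real j * slack \<beta>) + slack \<beta>} \<subseteq> pinned_coords p k"
    using pinned_coords_Suc_interval by (metis add.assoc)
  moreover have "x'' + (\<delta> + real j * slack \<beta>) + slack \<beta> = x'' + \<delta> + real (Suc j) * slack \<beta>"
    by (simp add: algebra_simps)
  ultimately show ?case
    by auto
qed (use exI[of _ x] in simp)

lemma eventually_unpinned: "\<exists>J. \<forall>P. legal_pos \<beta> P \<longrightarrow> \<not> pinned \<beta> \<sigma> p J P"
proof -
  obtain J :: nat where J: "1 < real J * slack \<beta>"
    using reals_Archimedean3[OF slack_pos] by blast
  have "\<not> pinned \<beta> \<sigma> p J P" if "legal_pos \<beta> P" for P
  proof
    assume "pinned \<beta> \<sigma> p J P"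
    then have "{rel_coord p (pos_box P)..rel_coord p (pos_box P) + 0} \<subseteq> pinned_coords p (0 + J)"
      using that unfolding pinned_coords_def by auto
    then obtain x' where "{x'..x' + 0 + real J * slack \<beta>} \<subseteq> pinned_coords p 0"
      using pinned_coords_interval[of 0] by blast
    moreover have "x' \<le> x' + real J * slack \<beta>"
      using slack_pos by simp
    ultimately have "x' \<in> pinned_coords p 0" "x' + real J * slack \<beta> \<in> pinned_coords p 0"
      by auto
    then have "x' \<in> {0..1}" "x' + real J * slack \<beta> \<in> {0..1}"
      by (simp_all only: pinned_coords_unit_interval)
    then show False
      using J by simp
  qed
  then show ?thesis
    by blast
qed

lemma bob_move_exists: "legal_pos \<beta> P \<Longrightarrow> \<exists>X. bob_move \<beta> (pos_box P) (alice_reply \<sigma> P) X"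
proof -
  assume P: "legal_pos \<beta> P"
  obtain a b where ab: "a < b" "pos_box P = {a..b}"
    using legal_pos_cpt_interval[OF P] unfolding cpt_interval_def by blast
  have "alice_move \<beta> {a..b} (alice_reply \<sigma> P)"
    using alice_reply_legal[OF strategy P] ab(2) by simp
  moreover have "0 \<le> slack \<beta> * (b - a)"
    using slack_pos ab(1) by simp
  ultimately show ?thesis
    using bob_avoids_or_cornered[OF \<beta>_pos \<beta>_small ab(1), of "alice_reply \<sigma> P" a] ab by fastforce
qed

lemma escape_outside:
  assumes P: "alice_follows \<beta> \<sigma> P" and p: "p \<notin> pos_box P"
  shows "\<exists>Q. extends P Q \<and> alice_follows \<beta> \<sigma> Q \<and> p \<notin> pos_box Q"
proof -
  obtain X where X: "bob_move \<beta> (pos_box P) (alice_reply \<sigma> P) X"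
    using bob_move_exists alice_follows_legal[OF P] by blast
  then have "p \<notin> X"
    using p unfolding bob_move_def by blast
  then show ?thesis
    using alice_follows_advance[OF strategy P X] extends_advance pos_box_advance by metis
qed

lemma escape_unpinned:
  "alice_follows \<beta> \<sigma> P \<Longrightarrow> \<not> pinned \<beta> \<sigma> p k P \<Longrightarrow>
     \<exists>Q. extends P Q \<and> alice_follows \<beta> \<sigma> Q \<and> p \<notin> pos_box Q"
proof (induction k arbitrary: P)
  case 0
  then show ?case
    using escape_outside by (simp only: pinned.simps)
next
  case (Suc k)
  show ?case
  proof (cases "p \<in> pos_box P")
    case True
    then obtain X where X: "bob_move \<beta> (pos_box P) (alice_reply \<sigma> P) X"
      and unpinned: "\<not> pinned \<beta> \<sigma> p k (advance P (alice_reply \<sigma> P) X)"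
      using Suc.prems(2) by (auto simp only: pinned.simps)
    then show ?thesis
      using Suc.IH alice_follows_advance[OF strategy Suc.prems(1) X] extends_advance extends_trans
      by metis
  qed (rule escape_outside[OF Suc.prems(1)])
qed

lemma escape:
  assumes "alice_follows \<beta> \<sigma> P"
  shows "\<exists>Q. extends P Q \<and> alice_follows \<beta> \<sigma> Q \<and> p \<notin> pos_box Q"
proof -
  obtain J where "\<not> pinned \<beta> \<sigma> p J P"
    using eventually_unpinned alice_follows_legal[OF assms] by blast
  then show ?thesis
    using escape_unpinned[OF assms] by blast
qed

lemma alice_follows_split:
  assumes P: "alice_follows \<beta> \<sigma> P"
  shows "\<exists>Q1 Q2. alice_follows \<beta> \<sigma> Q1 \<and> alice_follows \<beta> \<sigma> Q2 \<and> extends P Q1 \<and> extends P Q2 \<and>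
                 pos_box Q1 \<inter> pos_box Q2 = {}"
proof (rule ccontr)
  define R where "R = {Q. alice_follows \<beta> \<sigma> Q \<and> extends P Q}"
  assume "\<not> ?thesis"
  then have meet: "pos_box Q1 \<inter> pos_box Q2 \<noteq> {}" if "Q1 \<in> R" "Q2 \<in> R" for Q1 Q2
    using that unfolding R_def by blast
  have box: "pos_box Q = {Inf (pos_box Q)..Sup (pos_box Q)}" if "Q \<in> R" for Q
    using that alice_follows_legal legal_pos_cpt_interval cpt_interval_Inf_Sup
    unfolding R_def by blast
  have Inf_le_Sup: "Inf (pos_box Q1) \<le> Sup (pos_box Q2)" if Q: "Q1 \<in> R" "Q2 \<in> R" for Q1 Q2
  proof -
    obtain z where "z \<in> pos_box Q1" "z \<in> pos_box Q2"
      using meet[OF Q] by blast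
    then show ?thesis
      using box[OF Q(1)] box[OF Q(2)] by (metis atLeastAtMost_iff order.trans)
  qed
  define s where "s = Sup ((\<lambda>Q. Inf (pos_box Q)) ` R)"
  obtain Q0 where "Q0 \<in> R"
    using escape[OF P] unfolding R_def by blast
  have "s \<in> pos_box Q" if "Q \<in> R" for Q
  proof -
    have "bdd_above ((\<lambda>Q. Inf (pos_box Q)) ` R)"
      using Inf_le_Sup[OF _ that] by (rule bdd_aboveI2)
    then have "Inf (pos_box Q) \<le> s"
      unfolding s_def using that by (intro cSUP_upper)
    moreover have "s \<le> Sup (pos_box Q)"
      unfolding s_def using \<open>Q0 \<in> R\<close> Inf_le_Sup[OF _ that] by (intro cSUP_least) auto
    ultimately show ?thesis
      by (subst box[OF that]) simp
  qed
  then show False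
    using escape[OF P, of s] unfolding R_def by blast
qed

theorem not_winning:
  assumes S: "bernstein_set S"
  shows "\<not> alice_winning \<beta> S \<sigma>"
proof
  assume win: "alice_winning \<beta> S \<sigma>"
  have "alice_follows \<beta> \<sigma> (Pos (\<lambda>_. {0..1}) (\<lambda>_. {}) 0)"
    by (auto simp: legal_upto_def cpt_interval_def)
  then have "\<exists>C. closed C \<and> uncountable C \<and>
               (\<forall>x \<in> C. \<exists>Q. position_chain Q \<and> (\<forall>k. alice_follows \<beta> \<sigma> (Q k) \<and> x \<in> pos_box (Q k)))"
    using alice_follows_legal alice_follows_split
    by (rule splitting_positions_chain[of "alice_follows \<beta> \<sigma>"])
  then obtain C where C: "closed C" "uncountable C"
    and chain: "\<And>x. x \<in> C \<Longrightarrow> \<exists>Q. position_chain Q \<and> (\<forall>k. alice_follows \<beta> \<sigma> (Q k) \<and> x \<in> pos_box (Q k))"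
    by blast
  obtain x where x: "x \<notin> S" "x \<in> C"
    using S C unfolding bernstein_set_def by blast
  obtain Q where Q: "position_chain Q" "\<And>k. alice_follows \<beta> \<sigma> (Q k)" "\<And>k. x \<in> pos_box (Q k)"
    using chain[OF x(2)] by blast
  interpret position_chain Q
    by (fact Q(1))
  have play: "legal_play \<beta> limit_B limit_A"
    using Q(2) alice_follows_legal legal_play_limit by blast
  then obtain y where y: "y \<in> S" "y \<in> (\<Inter>n. limit_B n)"
    using win alice_follows_limit[OF Q(2)] unfolding alice_winning_def by blast
  have "x \<in> (\<Inter>n. limit_B n)"
    using Q(2,3) alice_follows_legal pos_box_subset_limit_B by blast
  then have "x = y"
    using legal_play_Inter_subsingleton[OF _ _ play] \<beta>_pos \<beta>_small y(2) by simp
  then show False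
    using x(1) y(1) by simp
qed

end

theorem theorem2:
  fixes \<beta> :: real and S :: "real set"
  assumes "0 < \<beta>" and "\<beta> < 1/3" and "bernstein_set S"
  shows "\<not> abs_game_determined \<beta> S"
proof -
  have "\<not> alice_winning \<beta> S \<sigma>" for \<sigma>
  proof
    assume win: "alice_winning \<beta> S \<sigma>"
    then interpret fixed_alice_strategy \<beta> \<sigma>
      using assms(1,2) by (simp add: fixed_alice_strategy_def alice_winning_def)
    show False
      using not_winning[OF assms(3)] win by contradiction
  qed
  moreover have "\<not> bob_winning \<beta> S \<tau>" for \<tau>
    using bob_not_winning assms by force
  ultimately show ?thesis
    unfolding abs_game_determined_def by blast
qed

end
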